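(* Assume $\overline{c}>p$. Then there exist constants $K_2>0$ and $K_3>0$ such that $$0\le V(x_2,c_1)-V(x_1,c_2)\le\left[K_2+\frac{K_3}{c_1-p}\right](x_2-x_1)+\left[K_2+\frac{K_3x_2}{(c_1-p)^2}\right](c_2-c_1)$$ for all $0\le x_1\le x_2$ and $p<c_1\le c_2\le\overline{c}$.
   Context: Cramér–Lundberg model: the uncontrolled surplus is $X_t=x+pt-\sum_{i=1}^{N_t}U_i$, where $x\ge0$ is the initial surplus, $p>0$ the premium rate, $N_t$ a Poisson process with intensity $\beta>0$, and the claims $U_i$ are i.i.d. positive random variables, independent of $N$, with continuous distribution function $F$; the safety loading condition $p>\beta\mathbb{E}[U_1]$ holds. Standing assumption (A1): $F$ is globally Lipschitz, i.e. $0\le F(y)-F(x)\le K(y-x)$ for $x<y$, for some $K>0$. Let $(\mathcal{F}_t)$ be the completed filtration generated by $X$. Fix $\overline{c}>0$ and a discount rate $q>0$. For $x\ge0$, $c\in[0,\overline{c}]$, $\Pi_{x,c,\overline{c}}$ is the set of càdlàg, adapted, non-decreasing processes $C=(C_t)$ with $c\le C_t\le\overline{c}$ for all $t$. Controlled surplus $X^C_t=X_t-\int_0^tC_sds$ ($X_0=x$), ruin time $\tau=\inf\{t\ge0:X^C_t<0\}$, $J(x;C)=\mathbb{E}[\int_0^\tau e^{-qs}C_sds]$, $V(x,c)=\sup_{C\in\Pi_{x,c,\overline{c}}}J(x;C)$. Convention: only strategies are considered such that if $C_{t^-}=p$ and $X^C_t=0$ for some $t>0$ then $C_s=p$ for $s\ge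 t$ until ruin; and the only strategy considered in $\Pi_{0,p,\overline{c}}$ is to pay at rate $p$ until the first claim arrival. *)

theory Defs
  imports "HOL-Probability.Probability"
begin

text \<open>E i : i.i.d. exponential inter-arrival times (arrival times S_n = sum of E i, i < n, n >= 1),
  U i : i.i.d. claim sizes (claim number i+1 is U i).\<close>

definition Ncount :: "(nat \<Rightarrow> 'a \<Rightarrow> real) \<Rightarrow> real \<Rightarrow> 'a \<Rightarrow> nat" where
  "Ncount E t \<omega> = card {n::nat. 1 \<le> n \<and> (\<Sum>i<n. E i \<omega>) \<le> t}"

definition surplus :: "(nat \<Rightarrow> 'a \<Rightarrow> real) \<Rightarrow> (nat \<Rightarrow> 'a \<Rightarrow> real) \<Rightarrow> real \<Rightarrow> real
    \<Rightarrow> real \<Rightarrow> 'a \<Rightarrow> real" where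
  "surplus E U p x t \<omega> = x + p * t - (\<Sum>i<Ncount E t \<omega>. U i \<omega>)"

definition filt :: "'a measure \<Rightarrow> (nat \<Rightarrow> 'a \<Rightarrow> real) \<Rightarrow> (nat \<Rightarrow> 'a \<Rightarrow> real) \<Rightarrow> real
    \<Rightarrow> real \<Rightarrow> real \<Rightarrow> 'a measure" where
  "filt M E U p x t = sigma (space M)
     ({(\<lambda>\<omega>. surplus E U p x s \<omega>) -` B \<inter> space M | s B. 0 \<le> s \<and> s \<le> t \<and> B \<in> sets borel}
      \<union> null_sets M)"

definition ctrl_surplus :: "(nat \<Rightarrow> 'a \<Rightarrow> real) \<Rightarrow> (nat \<Rightarrow> 'a \<Rightarrow> real) \<Rightarrow> real \<Rightarrow> real
    \<Rightarrow> (real \<Rightarrow> 'a \<Rightarrow> real) \<Rightarrow> real \<Rightarrow> 'a \<Rightarrow> real" where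
  "ctrl_surplus E U p x C t \<omega> = surplus E U p x t \<omega> - integral {0..t} (\<lambda>s. C s \<omega>)"

definition ruin_time :: "(nat \<Rightarrow> 'a \<Rightarrow> real) \<Rightarrow> (nat \<Rightarrow> 'a \<Rightarrow> real) \<Rightarrow> real \<Rightarrow> real
    \<Rightarrow> (real \<Rightarrow> 'a \<Rightarrow> real) \<Rightarrow> 'a \<Rightarrow> ereal" where
  "ruin_time E U p x C \<omega> = Inf {ereal t | t. 0 \<le> t \<and> ctrl_surplus E U p x C t \<omega> < 0}"

text \<open>Admissible strategies Pi_{x,c,cbar}: cadlag (right-continuous; left limits exist
  automatically by monotonicity and boundedness), adapted, non-decreasing, with values in
  [c, cbar], plus the two conventions of the paper.\<close>
definition strategies :: "'a measure \<Rightarrow> (nat \<Rightarrow> 'a \<Rightarrow> real) \<Rightarrow> (nat \<Rightarrow> 'a \<Rightarrow> real) \<Rightarrow> real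
    \<Rightarrow> real \<Rightarrow> real \<Rightarrow> real \<Rightarrow> (real \<Rightarrow> 'a \<Rightarrow> real) set" where
  "strategies M E U p cbar x c = {C.
     (\<forall>\<omega>\<in>space M. \<forall>t\<ge>0. c \<le> C t \<omega> \<and> C t \<omega> \<le> cbar) \<and>
     (\<forall>\<omega>\<in>space M. mono_on {0..} (\<lambda>t. C t \<omega>)) \<and>
     (\<forall>\<omega>\<in>space M. \<forall>t\<ge>0. continuous (at_right t) (\<lambda>s. C s \<omega>)) \<and>
     (\<forall>t\<ge>0. (\<lambda>\<omega>. C t \<omega>) \<in> borel_measurable (filt M E U p x t)) \<and>
     (\<forall>\<omega>\<in>space M. \<forall>t>0. ((\<lambda>s. C s \<omega>) \<longlongrightarrow> p) (at_left t) \<and> ctrl_surplus E U p x C t \<omega> = 0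
         \<longrightarrow> (\<forall>s\<ge>t. ereal s < ruin_time E U p x C \<omega> \<longrightarrow> C s \<omega> = p)) \<and>
     (x = 0 \<and> c = p \<longrightarrow> (\<forall>\<omega>\<in>space M. \<forall>t. 0 \<le> t \<and> t < E 0 \<omega> \<longrightarrow> C t \<omega> = p))}"

definition Jval :: "'a measure \<Rightarrow> (nat \<Rightarrow> 'a \<Rightarrow> real) \<Rightarrow> (nat \<Rightarrow> 'a \<Rightarrow> real) \<Rightarrow> real
    \<Rightarrow> real \<Rightarrow> real \<Rightarrow> (real \<Rightarrow> 'a \<Rightarrow> real) \<Rightarrow> ennreal" where
  "Jval M E U p q x C = (\<integral>\<^sup>+ \<omega>. (\<integral>\<^sup>+ s. indicator {s. 0 \<le> s \<and> ereal s < ruin_time E U p x C \<omega>} s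
        * ennreal (exp (- q * s) * C s \<omega>) \<partial>lborel) \<partial>M)"

definition Vval :: "'a measure \<Rightarrow> (nat \<Rightarrow> 'a \<Rightarrow> real) \<Rightarrow> (nat \<Rightarrow> 'a \<Rightarrow> real) \<Rightarrow> real
    \<Rightarrow> real \<Rightarrow> real \<Rightarrow> real \<Rightarrow> real \<Rightarrow> real" where
  "Vval M E U p q cbar x c = enn2real (SUP C \<in> strategies M E U p cbar x c. Jval M E U p q x C)"

end

theory Submission
  imports Defs
begin

text \<open>
  Every strategy admissible for \<open>(x\<^sub>1, c\<^sub>2)\<close> is admissible for \<open>(x\<^sub>2, c\<^sub>1)\<close>,
  and a larger initial surplus only delays ruin; hence \<open>V(x\<^sub>1, c\<^sub>2) \<le> V(x\<^sub>2, c\<^sub>1)\<close>.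
  Conversely, if \<open>C\<close> is admissible for \<open>(x\<^sub>2, c\<^sub>1)\<close>, then \<open>max C c\<^sub>2\<close> is admissible
  for \<open>(x\<^sub>1, c\<^sub>2)\<close> and pays at least as much at every time. Its surplus path lies
  below that of \<open>C\<close> by at most \<open>(x\<^sub>2 - x\<^sub>1) + (c\<^sub>2 - c\<^sub>1) t\<close>, while the surplus of \<open>C\<close>
  decreases at rate at least \<open>c\<^sub>1 - p\<close> and is therefore ruined before \<open>x\<^sub>2 / (c\<^sub>1 - p)\<close>.
  So \<open>C\<close> is ruined at most \<open>L = ((x\<^sub>2 - x\<^sub>1) + (c\<^sub>2 - c\<^sub>1) x\<^sub>2 / (c\<^sub>1 - p)) / (c\<^sub>1 - p)\<close>
  time units after \<open>max C c\<^sub>2\<close>, and meanwhile collects dividends of at most \<open>cbar L\<close>.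
  This gives the estimate with \<open>K\<^sub>2 = 1\<close> and \<open>K\<^sub>3 = cbar\<close>.
\<close>

lemma (in prob_space) indep_vars_reindex:
  assumes inj: "inj_on f I" and indep: "indep_vars M' X (f ` I)"
  shows "indep_vars (\<lambda>i. M' (f i)) (\<lambda>i. X (f i)) I"
  unfolding indep_vars_def
proof (intro conjI ballI)
  show "random_variable (M' (f i)) (X (f i))" if "i \<in> I" for i
    using indep that by (auto simp: indep_vars_def)
  let ?F = "\<lambda>k. sigma_sets (space M) {X k -` A \<inter> space M |A. A \<in> sets (M' k)}"
  have F: "indep_sets ?F (f ` I)"
    using indep by (simp add: indep_vars_def)
  show "indep_sets (\<lambda>i. ?F (f i)) I"
    unfolding indep_sets_def
  proof (intro conjI ballI allI impI)
    show "?F (f i) \<subseteq> events" if "i \<in> I" for i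
      using F that by (auto simp: indep_sets_def)
    fix J A assume J: "J \<subseteq> I" "J \<noteq> {}" "finite J" and A: "A \<in> (\<Pi> j\<in>J. ?F (f j))"
    have injJ: "inj_on f J" using inj J(1) by (rule inj_on_subset)
    define B where "B = (\<lambda>k. A (the_inv_into J f k))"
    have B: "B \<in> (\<Pi> k\<in>f ` J. ?F k)"
      using A injJ by (auto simp: B_def the_inv_into_f_f)
    have "prob (\<Inter>k\<in>f ` J. B k) = (\<Prod>k\<in>f ` J. prob (B k))"
      using F J B unfolding indep_sets_def by (meson image_is_empty finite_imageI image_mono)
    then show "prob (\<Inter>j\<in>J. A j) = (\<Prod>j\<in>J. prob (A j))"
      using injJ by (simp add: B_def the_inv_into_f_f prod.reindex)
  qed
qed

lemma (in prob_space) AE_exponential_pos: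
  assumes D: "distributed M lborel X (exponential_density l)" and l: "0 < l"
  shows "AE x in M. 0 < X x"
proof -
  have "X \<in> borel_measurable M" using distributed_measurable[OF D] by simp
  moreover have "\<P>(x in M. 0 < X x) = 1" using exponential_distributedD_gt[OF D _ l, of 0] by simp
  ultimately show ?thesis by (subst (asm) prob_Collect_eq_1) measurable
qed

lemma (in prob_space) AE_frequently_exponential_gt_1:
  fixes E :: "nat \<Rightarrow> 'a \<Rightarrow> real"
  assumes l: "0 < l" and D: "\<And>i. distributed M lborel (E i) (exponential_density l)"
    and indep: "indep_vars (\<lambda>_. borel) E UNIV"
  shows "AE \<omega> in M. \<exists>\<^sub>F i in sequentially. 1 < E i \<omega>"
proof -
  have E: "\<And>i. E i \<in> borel_measurable M" using distributed_measurable[OF D] by simp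
  define a where "a = 1 - exp (- l)"
  have a: "0 \<le> a" "a < 1" using l by (auto simp: a_def)
  have prob_le_1: "prob (E i -` {..1} \<inter> space M) = a" for i
  proof -
    have "E i -` {..1} \<inter> space M = {x\<in>space M. E i x \<le> 1}" by auto
    then show ?thesis using exponential_distributedD_le[OF D[of i] _ l, of 1] by (simp add: a_def)
  qed
  have "AE \<omega> in M. \<exists>i\<ge>N. 1 < E i \<omega>" for N
  proof -
    define A where "A = {\<omega>\<in>space M. \<forall>i\<ge>N. E i \<omega> \<le> 1}"
    have A: "A \<in> events" unfolding A_def using E by measurable
    have "prob A \<le> a ^ Suc k" for k
    proof -
      have "prob A \<le> prob (\<Inter>i\<in>{N..<N + Suc k}. E i -` {..1} \<inter> space M)"
        using E by (intro finite_measure_mono) (auto simp: A_def)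
      also have "\<dots> = (\<Prod>i\<in>{N..<N + Suc k}. prob (E i -` {..1} \<inter> space M))"
        by (rule indep_varsD[OF indep]) auto
      finally show ?thesis by (simp add: prob_le_1)
    qed
    with a have "prob A \<le> 0"
      by (intro LIMSEQ_le_const[OF LIMSEQ_Suc[OF LIMSEQ_power_zero]]) (auto simp del: power_Suc)
    then have "A \<in> null_sets M"
      using A by (intro null_setsI) (auto simp: emeasure_eq_measure measure_le_0_iff)
    then show "AE \<omega> in M. \<exists>i\<ge>N. 1 < E i \<omega>"
      by (rule AE_I') (auto simp: A_def not_less)
  qed
  then show ?thesis by (simp add: frequently_sequentially AE_all_countable)
qed

text \<open>No measurability of \<open>f\<close> is needed, unlike for \<open>nn_integral_add\<close>: the dividend
  integrands below are not known to be measurable.\<close>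

lemma nn_integral_add_simple_le:
  assumes g: "simple_function M g"
  shows "(\<integral>\<^sup>+x. f x + g x \<partial>M) \<le> integral\<^sup>N M f + integral\<^sup>N M g"
proof -
  have "integral\<^sup>S M h \<le> integral\<^sup>N M f + integral\<^sup>N M g"
    if h: "simple_function M h" "h \<le> (\<lambda>x. f x + g x)" "\<forall>x. h x < top" for h
  proof -
    let ?h = "\<lambda>x. h x - g x"
    have h': "simple_function M ?h" using h g by auto
    have "?h \<le> f"
    proof (rule le_funI)
      fix x
      have "h x \<le> f x + g x" "h x < top" using h(2,3) by (auto simp: le_fun_def)
      then show "h x - g x \<le> f x" by (auto simp: ennreal_minus_le_iff add.commute)
    qed
    with h' have f: "integral\<^sup>S M ?h \<le> integral\<^sup>N M f"
      unfolding nn_integral_def by (intro SUP_upper) auto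
    have "h x \<le> ?h x + g x" for x
      by (cases "g x \<le> h x") (auto simp: diff_add_cancel_ennreal intro: add_increasing)
    then have "integral\<^sup>S M h \<le> integral\<^sup>S M (\<lambda>x. ?h x + g x)"
      using h h' g by (intro simple_integral_mono) auto
    also have "\<dots> = integral\<^sup>S M ?h + integral\<^sup>S M g"
      using h' g by (intro simple_integral_add) auto
    finally show ?thesis
      using f g by (simp add: nn_integral_eq_simple_integral add_right_mono order_trans)
  qed
  then show ?thesis
    unfolding nn_integral_def_finite[of M "\<lambda>x. f x + g x"] by (intro SUP_least) auto
qed

section \<open>Surplus paths\<close>

lemma finite_partial_sums_le:
  fixes e :: "nat \<Rightarrow> real"
  assumes nonneg: "\<And>i. 0 \<le> e i" and often: "\<exists>\<^sub>F i in sequentially. 1 < e i"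
  shows "finite {n. (\<Sum>i<n. e i) \<le> t}"
proof -
  have "\<exists>n. real k \<le> (\<Sum>i<n. e i)" for k
  proof (induction k)
    case 0
    show ?case by (auto intro: exI[of _ 0])
  next
    case (Suc k)
    then obtain n where n: "real k \<le> (\<Sum>i<n. e i)" by blast
    obtain m where m: "n \<le> m" "1 < e m" using often by (auto simp: frequently_sequentially)
    have "(\<Sum>i<n. e i) \<le> (\<Sum>i<m. e i)" using nonneg m(1) by (intro sum_mono2) auto
    with n m(2) have "real (Suc k) \<le> (\<Sum>i<Suc m. e i)" by simp
    then show ?case by blast
  qed
  moreover obtain k :: nat where "t < real k" using reals_Archimedean2 by blast
  ultimately obtain n where n: "t < (\<Sum>i<n. e i)" by (meson less_le_trans)
  have "m < n" if "(\<Sum>i<m. e i) \<le> t" for m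
  proof (rule ccontr)
    assume "\<not> m < n"
    then have "(\<Sum>i<n. e i) \<le> (\<Sum>i<m. e i)" using nonneg by (intro sum_mono2) auto
    with n that show False by linarith
  qed
  then have "{m. (\<Sum>i<m. e i) \<le> t} \<subseteq> {..<n}" by blast
  then show ?thesis by (rule finite_subset) simp
qed

text \<open>Since \<open>card\<close> of an infinite set is \<open>0\<close>, \<^const>\<open>Ncount\<close> counts the arrivals correctly,
  and is monotone in time, only on paths whose arrival times are unbounded.\<close>

definition regular_path :: "(nat \<Rightarrow> 'a \<Rightarrow> real) \<Rightarrow> (nat \<Rightarrow> 'a \<Rightarrow> real) \<Rightarrow> 'a \<Rightarrow> bool" where
  "regular_path E U \<omega> \<longleftrightarrow> (\<forall>i. 0 \<le> E i \<omega>) \<and> (\<forall>i. 0 \<le> U i \<omega>) \<and> (\<forall>t. finite {n. (\<Sum>i<n. E i \<omega>) \<le> t})"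

lemma (in prob_space) AE_regular_path:
  assumes "0 < \<beta>" and "\<And>i. distributed M lborel (E i) (exponential_density \<beta>)"
    and "indep_vars (\<lambda>_. borel) E UNIV" and "\<And>i. AE \<omega> in M. 0 \<le> U i \<omega>"
  shows "AE \<omega> in M. regular_path E U \<omega>"
proof -
  have "\<forall>i. AE \<omega> in M. 0 < E i \<omega>"
    using assms(1,2) by (blast intro: AE_exponential_pos)
  then have "AE \<omega> in M. \<forall>i. 0 < E i \<omega>" by (simp add: AE_all_countable)
  moreover have "AE \<omega> in M. \<forall>i. 0 \<le> U i \<omega>"
    using assms(4) by (simp add: AE_all_countable)
  moreover have "AE \<omega> in M. \<exists>\<^sub>F i in sequentially. 1 < E i \<omega>"
    using assms(1-3) by (rule AE_frequently_exponential_gt_1)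
  ultimately show ?thesis
    unfolding regular_path_def
    by eventually_elim (auto intro: finite_partial_sums_le less_imp_le)
qed

lemma Ncount_mono:
  assumes "regular_path E U \<omega>" "t \<le> s"
  shows "Ncount E t \<omega> \<le> Ncount E s \<omega>"
  unfolding Ncount_def using assms
  by (intro card_mono) (auto simp: regular_path_def intro: rev_finite_subset)

lemma ctrl_surplus_decrease:
  assumes \<omega>: "regular_path E U \<omega>"
    and C: "\<forall>r\<ge>0. c \<le> C r \<omega>" "mono_on {0..} (\<lambda>r. C r \<omega>)" and ts: "0 \<le> t" "t \<le> s"
  shows "ctrl_surplus E U p x C s \<omega> \<le> ctrl_surplus E U p x C t \<omega> - (c - p) * (s - t)"
proof -
  have "(\<Sum>i<Ncount E t \<omega>. U i \<omega>) \<le> (\<Sum>i<Ncount E s \<omega>. U i \<omega>)"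
    using \<omega> Ncount_mono[OF \<omega> ts(2)] by (intro sum_mono2) (auto simp: regular_path_def)
  moreover have int: "(\<lambda>r. C r \<omega>) integrable_on {0..s}"
    by (rule integrable_on_mono_on[OF mono_on_subset[OF C(2)]]) auto
  then have "integral {0..s} (\<lambda>r. C r \<omega>) = integral {0..t} (\<lambda>r. C r \<omega>) + integral {t..s} (\<lambda>r. C r \<omega>)"
    using Henstock_Kurzweil_Integration.integral_combine[OF ts int] by simp
  moreover have "integral {t..s} (\<lambda>_. c) \<le> integral {t..s} (\<lambda>r. C r \<omega>)"
    using integrable_on_subinterval[OF int, of t s] C(1) ts by (intro integral_le) auto
  ultimately show ?thesis
    using ts unfolding ctrl_surplus_def surplus_def by (simp add: algebra_simps)
qed

lemma ctrl_surplus_0_le: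
  assumes "\<And>i. 0 \<le> U i \<omega>"
  shows "ctrl_surplus E U p x C 0 \<omega> \<le> x"
  unfolding ctrl_surplus_def surplus_def using assms by (simp add: sum_nonneg)

lemma mono_on_max_const:
  fixes f :: "'a::order \<Rightarrow> 'b::linorder"
  assumes "mono_on A f"
  shows "mono_on A (\<lambda>x. max (f x) c)"
  using assms unfolding mono_on_def by (meson max.mono order_refl)

lemma integral_max_const_le:
  fixes f :: "real \<Rightarrow> real"
  assumes mono: "mono_on {0..} f" and lower: "\<forall>s\<ge>0. c1 \<le> f s" and "c1 \<le> c2" "0 \<le> t"
  shows "integral {0..t} (\<lambda>s. max (f s) c2) \<le> integral {0..t} f + (c2 - c1) * t"
proof -
  have mono_t: "mono_on {0..t} f" by (rule mono_on_subset[OF mono]) auto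
  then have f: "f integrable_on {0..t}" by (rule integrable_on_mono_on)
  have "(\<lambda>s. max (f s) c2) integrable_on {0..t}"
    by (rule integrable_on_mono_on[OF mono_on_max_const[OF mono_t]])
  then have "integral {0..t} (\<lambda>s. max (f s) c2) \<le> integral {0..t} (\<lambda>s. f s + (c2 - c1))"
    using integrable_add[OF f integrable_const_ivl] lower \<open>c1 \<le> c2\<close> by (intro integral_le) auto
  also have "\<dots> = integral {0..t} f + (c2 - c1) * t"
    using Henstock_Kurzweil_Integration.integral_add[OF f integrable_const_ivl] \<open>0 \<le> t\<close> by simp
  finally show ?thesis .
qed

text \<open>\<open>X\<close> is ruined before \<open>x / k\<close>; up to then \<open>X'\<close> lags behind \<open>X\<close> by less than
  \<open>A + d x / k\<close>, an amount \<open>X\<close> loses within time \<open>(A + d x / k) / k\<close>.\<close>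

lemma ruin_delay_bound:
  fixes X X' :: "real \<Rightarrow> real"
  assumes k: "0 < k" and A: "0 \<le> A" and d: "0 \<le> d" and x: "0 \<le> x"
    and below: "\<And>t. 0 \<le> t \<Longrightarrow> X t - A - d * t \<le> X' t"
    and decrease: "\<And>t s. 0 \<le> t \<Longrightarrow> t \<le> s \<Longrightarrow> X s \<le> X t - k * (s - t)"
    and start: "X 0 \<le> x"
  shows "Inf {ereal t | t. 0 \<le> t \<and> X t < 0}
    \<le> Inf {ereal t | t. 0 \<le> t \<and> X' t < 0} + ereal ((A + d * x / k) / k)"
proof (rule dense_ge)
  define L where "L = (A + d * x / k) / k"
  have L: "0 \<le> L" unfolding L_def using k A d x by simp
  fix y assume y: "Inf {ereal t | t. 0 \<le> t \<and> X' t < 0} + ereal ((A + d * x / k) / k) < y"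
  show "Inf {ereal t | t. 0 \<le> t \<and> X t < 0} \<le> y"
  proof (cases y)
    case (real s)
    have "Inf {ereal t | t. 0 \<le> t \<and> X' t < 0} < ereal (s - L)"
      using y real unfolding L_def[symmetric]
      by (cases "Inf {ereal t | t. 0 \<le> t \<and> X' t < 0}") auto
    then obtain t where t: "0 \<le> t" "X' t < 0" "t < s - L"
      by (auto simp: Inf_less_iff)
    have "X s < 0"
    proof (cases "x / k < t")
      case True
      then have "x < k * t" using k by (simp add: pos_divide_less_eq mult.commute)
      also have "\<dots> \<le> k * s" using k t(3) L by simp
      finally have "x < k * s" .
      moreover have "X s \<le> x - k * s" using decrease[of 0 s] start t L by simp
      ultimately show ?thesis by linarith
    next
      case False
      then have "d * t \<le> d * (x / k)" using d by (intro mult_left_mono) auto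
      with below[OF t(1)] t(2) have "X t < A + d * x / k" by simp
      also have "\<dots> = k * L" unfolding L_def using k by simp
      finally have "X t < k * L" .
      moreover have "k * L < k * (s - t)" using t k by simp
      ultimately show ?thesis using decrease[of t s] t L by simp
    qed
    then have "ereal s \<in> {ereal t | t. 0 \<le> t \<and> X t < 0}" using t L by auto
    then show ?thesis using real by (simp add: Inf_lower)
  qed (use y in auto)
qed

section \<open>Discounted dividends\<close>

definition discounted_dividends :: "real \<Rightarrow> ereal \<Rightarrow> (real \<Rightarrow> real) \<Rightarrow> ennreal" where
  "discounted_dividends q \<tau> c =
     (\<integral>\<^sup>+ s. indicator {s. 0 \<le> s \<and> ereal s < \<tau>} s * ennreal (exp (- q * s) * c s) \<partial>lborel)"

lemma Jval_eq_discounted_dividends: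
  "Jval M E U p q x C = (\<integral>\<^sup>+ \<omega>. discounted_dividends q (ruin_time E U p x C \<omega>) (\<lambda>s. C s \<omega>) \<partial>M)"
  by (simp add: Jval_def discounted_dividends_def)

lemma discounted_dividends_mono:
  assumes "\<tau> \<le> \<tau>'" and "\<And>s. 0 \<le> s \<Longrightarrow> c s \<le> c' s"
  shows "discounted_dividends q \<tau> c \<le> discounted_dividends q \<tau>' c'"
  unfolding discounted_dividends_def
proof (intro nn_integral_mono)
  fix s
  show "indicator {s. 0 \<le> s \<and> ereal s < \<tau>} s * ennreal (exp (- q * s) * c s)
     \<le> indicator {s. 0 \<le> s \<and> ereal s < \<tau>'} s * ennreal (exp (- q * s) * c' s)"
    using assms order_less_le_trans[of "ereal s" \<tau> \<tau>']
    by (auto simp: indicator_def intro!: ennreal_leI mult_left_mono)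
qed

lemma discounted_dividends_le:
  assumes q: "0 < q" and c: "\<And>s. 0 \<le> s \<Longrightarrow> c s \<le> cbar" and "0 \<le> cbar"
  shows "discounted_dividends q \<tau> c \<le> ennreal (cbar / q)"
proof -
  have "discounted_dividends q \<tau> c
      \<le> (\<integral>\<^sup>+ s. ennreal (cbar / q) * ennreal (exponential_density q s * s ^ 0) \<partial>lborel)"
    unfolding discounted_dividends_def
  proof (intro nn_integral_mono)
    fix s
    show "indicator {s. 0 \<le> s \<and> ereal s < \<tau>} s * ennreal (exp (- q * s) * c s)
       \<le> ennreal (cbar / q) * ennreal (exponential_density q s * s ^ 0)"
    proof (cases "0 \<le> s \<and> ereal s < \<tau>")
      case True
      then have "exp (- q * s) * c s \<le> exp (- q * s) * cbar"
        using c by (intro mult_left_mono) auto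
      also have "\<dots> = (cbar / q) * (exponential_density q s * s ^ 0)"
        using True q by (simp add: exponential_density_def)
      finally have "exp (- q * s) * c s \<le> (cbar / q) * (exponential_density q s * s ^ 0)" .
      then show ?thesis
        using True q \<open>0 \<le> cbar\<close> by (simp add: ennreal_mult'[symmetric] ennreal_leI)
    qed simp
  qed
  also have "\<dots> = ennreal (cbar / q)"
    using nn_integral_erlang_ith_moment[OF q, of 0 0] by (simp add: nn_integral_cmult)
  finally show ?thesis .
qed

lemma discounted_dividends_delay:
  assumes delay: "\<tau> \<le> \<tau>' + ereal L" and L: "0 \<le> L" and q: "0 \<le> q"
    and c: "\<And>s. 0 \<le> s \<Longrightarrow> c s \<le> cbar"
  shows "discounted_dividends q \<tau> c \<le> discounted_dividends q \<tau>' c + ennreal (cbar * L)"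
proof -
  define r where "r = real_of_ereal \<tau>'"
  define g where "g = (\<lambda>s::real. ennreal cbar * indicator {r..r + L} s)"
  let ?f = "\<lambda>\<tau> s. indicator {s. 0 \<le> s \<and> ereal s < \<tau>} s * ennreal (exp (- q * s) * c s)"
  have "?f \<tau> s \<le> ?f \<tau>' s + g s" for s
  proof (cases "0 \<le> s \<and> ereal s < \<tau> \<and> \<not> ereal s < \<tau>'")
    case True
    then have "\<tau>' = ereal r" using delay unfolding r_def by (cases \<tau>') auto
    with True delay have "s \<in> {r..r + L}" by (auto dest: order.strict_trans2)
    moreover have "ennreal (exp (- q * s) * c s) \<le> ennreal cbar"
    proof (cases "0 \<le> c s")
      case True
      have "exp (- q * s) * c s \<le> 1 * cbar" using q c True \<open>0 \<le> s \<and> _\<close> by (intro mult_mono) auto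
      then show ?thesis by (simp add: ennreal_leI)
    next
      case False
      then have "exp (- q * s) * c s \<le> 0" by (simp add: mult_nonneg_nonpos)
      then show ?thesis by (simp add: ennreal_neg)
    qed
    ultimately show ?thesis using True by (simp add: g_def add_increasing)
  next
    case False
    then show ?thesis by (auto simp: indicator_def add_increasing2)
  qed
  then have "discounted_dividends q \<tau> c \<le> (\<integral>\<^sup>+ s. ?f \<tau>' s + g s \<partial>lborel)"
    unfolding discounted_dividends_def by (intro nn_integral_mono)
  also have "\<dots> \<le> discounted_dividends q \<tau>' c + integral\<^sup>N lborel g"
    unfolding discounted_dividends_def g_def by (intro nn_integral_add_simple_le) auto
  also have "integral\<^sup>N lborel g = ennreal (cbar * L)"
    using L by (cases "0 \<le> cbar")
      (simp_all add: g_def nn_integral_cmult_indicator ennreal_mult ennreal_neg mult_nonpos_nonneg)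
  finally show ?thesis .
qed

section \<open>Admissible strategies\<close>

lemma filt_initial_independent: "filt M E U p x t = filt M E U p y t"
proof -
  define G where "G z = {(\<lambda>\<omega>. surplus E U p z s \<omega>) -` B \<inter> space M | s B. 0 \<le> s \<and> s \<le> t \<and> B \<in> sets borel}"
    for z
  have "G x \<subseteq> G y" for x y
  proof
    fix S assume "S \<in> G x"
    then obtain s B where S: "S = (\<lambda>\<omega>. surplus E U p x s \<omega>) -` B \<inter> space M"
      and s: "0 \<le> s" "s \<le> t" and B: "B \<in> sets borel"
      unfolding G_def by blast
    let ?B = "(\<lambda>z. z + (x - y)) -` B"
    have B': "?B \<in> sets borel"
      using measurable_sets[of "\<lambda>z::real. z + (x - y)" borel borel B] B by simp
    have "surplus E U p x s \<omega> = surplus E U p y s \<omega> + (x - y)" for \<omega>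
      by (simp add: surplus_def)
    then have "S = (\<lambda>\<omega>. surplus E U p y s \<omega>) -` ?B \<inter> space M"
      unfolding S by auto
    with s B' show "S \<in> G y"
      unfolding G_def by (intro CollectI exI[of _ s] exI[of _ ?B]) simp
  qed
  then have "G x = G y" using subset_antisym by blast
  then show ?thesis by (simp add: filt_def G_def)
qed

lemma tendsto_at_left_lower_bound:
  fixes f :: "real \<Rightarrow> real"
  assumes lim: "(f \<longlongrightarrow> l) (at_left t)" and "0 < t" and lower: "\<And>s. 0 \<le> s \<Longrightarrow> c \<le> f s"
  shows "c \<le> l"
proof (rule tendsto_lowerbound[OF lim])
  show "\<forall>\<^sub>F s in at_left t. c \<le> f s"
    using eventually_at_left_real[OF \<open>0 < t\<close>] by eventually_elim (use lower in auto)
qed simp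

lemma strategies_bounded:
  assumes "C \<in> strategies M E U p cbar x c" "\<omega> \<in> space M" "0 \<le> t"
  shows "c \<le> C t \<omega>" and "C t \<omega> \<le> cbar"
  using assms by (simp_all add: strategies_def)

lemma strategies_mono_on:
  assumes "C \<in> strategies M E U p cbar x c" "\<omega> \<in> space M"
  shows "mono_on {0..} (\<lambda>t. C t \<omega>)"
  using assms by (simp add: strategies_def)

text \<open>Above \<open>p\<close> the two conventions in the definition of admissible strategies are vacuous.\<close>

lemma strategies_antimono:
  assumes "p < c1" "c1 \<le> c2"
  shows "strategies M E U p cbar x1 c2 \<subseteq> strategies M E U p cbar x2 c1"
proof
  fix C assume "C \<in> strategies M E U p cbar x1 c2"
  then have bounds: "\<forall>\<omega>\<in>space M. \<forall>t\<ge>0. c2 \<le> C t \<omega> \<and> C t \<omega> \<le> cbar"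
    and mono: "\<forall>\<omega>\<in>space M. mono_on {0..} (\<lambda>t. C t \<omega>)"
    and right: "\<forall>\<omega>\<in>space M. \<forall>t\<ge>0. continuous (at_right t) (\<lambda>s. C s \<omega>)"
    and adapted: "\<forall>t\<ge>0. (\<lambda>\<omega>. C t \<omega>) \<in> borel_measurable (filt M E U p x1 t)"
    by (simp_all add: strategies_def)
  show "C \<in> strategies M E U p cbar x2 c1"
    unfolding strategies_def mem_Collect_eq
  proof (intro conjI)
    show "\<forall>\<omega>\<in>space M. \<forall>t\<ge>0. c1 \<le> C t \<omega> \<and> C t \<omega> \<le> cbar"
      using bounds \<open>c1 \<le> c2\<close> by fastforce
    show "\<forall>t\<ge>0. (\<lambda>\<omega>. C t \<omega>) \<in> borel_measurable (filt M E U p x2 t)"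
      using adapted by (simp add: filt_initial_independent[of M E U p x2 _ x1])
    show "\<forall>\<omega>\<in>space M. \<forall>t>0. ((\<lambda>s. C s \<omega>) \<longlongrightarrow> p) (at_left t) \<and> ctrl_surplus E U p x2 C t \<omega> = 0
         \<longrightarrow> (\<forall>s\<ge>t. ereal s < ruin_time E U p x2 C \<omega> \<longrightarrow> C s \<omega> = p)"
    proof (intro ballI allI impI)
      fix \<omega> t s assume "\<omega> \<in> space M" "0 < t"
        and "((\<lambda>s. C s \<omega>) \<longlongrightarrow> p) (at_left t) \<and> ctrl_surplus E U p x2 C t \<omega> = 0"
      then have "c2 \<le> p"
        using tendsto_at_left_lower_bound[of "\<lambda>s. C s \<omega>" p t c2] bounds by auto
      with assms show "C s \<omega> = p" by simp
    qed
  qed (use mono right assms in simp_all)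
qed

lemma max_strategy:
  assumes "p < c2" "c2 \<le> cbar" and "C \<in> strategies M E U p cbar x2 c1"
  shows "(\<lambda>t \<omega>. max (C t \<omega>) c2) \<in> strategies M E U p cbar x1 c2"
proof -
  let ?C = "\<lambda>t \<omega>. max (C t \<omega>) c2"
  from assms(3) have bounds: "\<forall>\<omega>\<in>space M. \<forall>t\<ge>0. C t \<omega> \<le> cbar"
    and mono: "\<forall>\<omega>\<in>space M. mono_on {0..} (\<lambda>t. C t \<omega>)"
    and right: "\<forall>\<omega>\<in>space M. \<forall>t\<ge>0. continuous (at_right t) (\<lambda>s. C s \<omega>)"
    and adapted: "\<forall>t\<ge>0. (\<lambda>\<omega>. C t \<omega>) \<in> borel_measurable (filt M E U p x2 t)"
    by (simp_all add: strategies_def)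
  show ?thesis
    unfolding strategies_def mem_Collect_eq
  proof (intro conjI)
    show "\<forall>\<omega>\<in>space M. \<forall>t\<ge>0. c2 \<le> ?C t \<omega> \<and> ?C t \<omega> \<le> cbar"
      using bounds \<open>c2 \<le> cbar\<close> by simp
    show "\<forall>\<omega>\<in>space M. mono_on {0..} (\<lambda>t. ?C t \<omega>)"
      using mono mono_on_max_const by blast
    show "\<forall>\<omega>\<in>space M. \<forall>t\<ge>0. continuous (at_right t) (\<lambda>s. ?C s \<omega>)"
      using right by (simp add: continuous_max)
    show "\<forall>t\<ge>0. (\<lambda>\<omega>. ?C t \<omega>) \<in> borel_measurable (filt M E U p x1 t)"
    proof (intro allI impI)
      fix t :: real assume "0 \<le> t"
      then have "(\<lambda>\<omega>. C t \<omega>) \<in> borel_measurable (filt M E U p x1 t)"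
        using adapted filt_initial_independent[of M E U p x2 t x1] by metis
      then show "(\<lambda>\<omega>. ?C t \<omega>) \<in> borel_measurable (filt M E U p x1 t)"
        using borel_measurable_max[of "\<lambda>_. c2" "filt M E U p x1 t" "C t"] by simp
    qed
    show "\<forall>\<omega>\<in>space M. \<forall>t>0. ((\<lambda>s. ?C s \<omega>) \<longlongrightarrow> p) (at_left t) \<and> ctrl_surplus E U p x1 ?C t \<omega> = 0
         \<longrightarrow> (\<forall>s\<ge>t. ereal s < ruin_time E U p x1 ?C \<omega> \<longrightarrow> ?C s \<omega> = p)"
    proof (intro ballI allI impI)
      fix \<omega> t s assume "\<omega> \<in> space M" "0 < t"
        and "((\<lambda>s. ?C s \<omega>) \<longlongrightarrow> p) (at_left t) \<and> ctrl_surplus E U p x1 ?C t \<omega> = 0"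
      then have "c2 \<le> p" using tendsto_at_left_lower_bound[of "\<lambda>s. ?C s \<omega>" p t c2] by auto
      with assms show "?C s \<omega> = p" by simp
    qed
  qed (use assms in simp)
qed

section \<open>Comparison of value functions\<close>

lemma ruin_time_mono_initial:
  assumes "x1 \<le> x2"
  shows "ruin_time E U p x1 C \<omega> \<le> ruin_time E U p x2 C \<omega>"
  unfolding ruin_time_def using assms
  by (intro Inf_superset_mono) (auto simp: ctrl_surplus_def surplus_def)

lemma Jval_mono_initial:
  assumes "x1 \<le> x2"
  shows "Jval M E U p q x1 C \<le> Jval M E U p q x2 C"
  unfolding Jval_eq_discounted_dividends
  by (intro nn_integral_mono discounted_dividends_mono ruin_time_mono_initial assms) simp

lemma (in prob_space) Jval_le:
  assumes "0 < q" "0 \<le> cbar" and C: "C \<in> strategies M E U p cbar x c"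
  shows "Jval M E U p q x C \<le> ennreal (cbar / q)"
proof -
  have "Jval M E U p q x C \<le> (\<integral>\<^sup>+ \<omega>. ennreal (cbar / q) \<partial>M)"
    unfolding Jval_eq_discounted_dividends using assms strategies_bounded(2)[OF C]
    by (intro nn_integral_mono discounted_dividends_le) auto
  then show ?thesis by (simp add: emeasure_space_1)
qed

lemma ruin_time_max_strategy_le:
  assumes \<omega>: "regular_path E U \<omega>"
    and C: "\<forall>t\<ge>0. c1 \<le> C t \<omega>" "mono_on {0..} (\<lambda>t. C t \<omega>)"
    and x: "0 \<le> x1" "x1 \<le> x2" and c: "p < c1" "c1 \<le> c2"
  shows "ruin_time E U p x2 C \<omega> \<le> ruin_time E U p x1 (\<lambda>t \<omega>. max (C t \<omega>) c2) \<omega>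
           + ereal (((x2 - x1) + (c2 - c1) * x2 / (c1 - p)) / (c1 - p))"
proof -
  define X where "X t = ctrl_surplus E U p x2 C t \<omega>" for t
  define X' where "X' t = ctrl_surplus E U p x1 (\<lambda>t \<omega>. max (C t \<omega>) c2) t \<omega>" for t
  have X': "X' t = X t - (x2 - x1)
      - (integral {0..t} (\<lambda>s. max (C s \<omega>) c2) - integral {0..t} (\<lambda>s. C s \<omega>))" for t
    unfolding X_def X'_def by (simp add: ctrl_surplus_def surplus_def)
  have "X t - (x2 - x1) - (c2 - c1) * t \<le> X' t" if "0 \<le> t" for t
    using integral_max_const_le[OF C(2,1) c(2) that] unfolding X' by linarith
  moreover have "X s \<le> X t - (c1 - p) * (s - t)" if "0 \<le> t" "t \<le> s" for t s
    unfolding X_def using ctrl_surplus_decrease[where C = C, OF \<omega> C that] .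
  moreover have "X 0 \<le> x2"
    unfolding X_def using \<omega> by (intro ctrl_surplus_0_le) (auto simp: regular_path_def)
  ultimately show ?thesis
    unfolding ruin_time_def X_def[symmetric] X'_def[symmetric]
    using c x by (intro ruin_delay_bound) auto
qed

lemma (in prob_space) Jval_le_max_strategy:
  assumes regular: "AE \<omega> in M. regular_path E U \<omega>" and C: "C \<in> strategies M E U p cbar x2 c1"
    and x: "0 \<le> x1" "x1 \<le> x2" and c: "p < c1" "c1 \<le> c2" and "0 \<le> q"
  shows "Jval M E U p q x2 C \<le> Jval M E U p q x1 (\<lambda>t \<omega>. max (C t \<omega>) c2)
           + ennreal (cbar * (((x2 - x1) + (c2 - c1) * x2 / (c1 - p)) / (c1 - p)))"
proof -
  define L where "L = ((x2 - x1) + (c2 - c1) * x2 / (c1 - p)) / (c1 - p)"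
  let ?C' = "\<lambda>t \<omega>. max (C t \<omega>) c2"
  have L: "0 \<le> L" using x c by (simp add: L_def)
  have "AE \<omega> in M. discounted_dividends q (ruin_time E U p x2 C \<omega>) (\<lambda>s. C s \<omega>)
      \<le> discounted_dividends q (ruin_time E U p x1 ?C' \<omega>) (\<lambda>s. ?C' s \<omega>) + ennreal (cbar * L)"
    using regular AE_space
  proof eventually_elim
    case (elim \<omega>)
    have C\<omega>: "\<forall>t\<ge>0. c1 \<le> C t \<omega>" "\<forall>t\<ge>0. C t \<omega> \<le> cbar" "mono_on {0..} (\<lambda>t. C t \<omega>)"
      using strategies_bounded[OF C elim(2)] strategies_mono_on[OF C elim(2)] by auto
    have "discounted_dividends q (ruin_time E U p x2 C \<omega>) (\<lambda>s. C s \<omega>)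
        \<le> discounted_dividends q (ruin_time E U p x1 ?C' \<omega>) (\<lambda>s. C s \<omega>) + ennreal (cbar * L)"
      using ruin_time_max_strategy_le[where C = C, OF elim(1) C\<omega>(1,3) x c, folded L_def]
        L \<open>0 \<le> q\<close> C\<omega>(2)
      by (intro discounted_dividends_delay) auto
    also have "\<dots> \<le> discounted_dividends q (ruin_time E U p x1 ?C' \<omega>) (\<lambda>s. ?C' s \<omega>)
        + ennreal (cbar * L)"
      by (intro add_right_mono discounted_dividends_mono) auto
    finally show ?case .
  qed
  then have "Jval M E U p q x2 C
      \<le> (\<integral>\<^sup>+\<omega>. discounted_dividends q (ruin_time E U p x1 ?C' \<omega>) (\<lambda>s. ?C' s \<omega>)
            + ennreal (cbar * L) \<partial>M)"
    unfolding Jval_eq_discounted_dividends by (rule nn_integral_mono_AE)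
  also have "\<dots> \<le> Jval M E U p q x1 ?C' + ennreal (cbar * L)"
    unfolding Jval_eq_discounted_dividends
    using nn_integral_add_simple_le[of M "\<lambda>_. ennreal (cbar * L)"] by (simp add: emeasure_space_1)
  finally show ?thesis unfolding L_def .
qed

lemma (in prob_space) Vval_mono:
  assumes "0 < q" "0 \<le> cbar" "p < c1" "c1 \<le> c2" "x1 \<le> x2"
  shows "Vval M E U p q cbar x1 c2 \<le> Vval M E U p q cbar x2 c1"
proof -
  let ?S = "\<lambda>x c. SUP C \<in> strategies M E U p cbar x c. Jval M E U p q x C"
  have "?S x1 c2 \<le> ?S x2 c1"
    using strategies_antimono[OF \<open>p < c1\<close> \<open>c1 \<le> c2\<close>] Jval_mono_initial[OF \<open>x1 \<le> x2\<close>]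
    by (intro SUP_mono) blast
  moreover have "?S x2 c1 \<le> ennreal (cbar / q)"
    using assms by (intro SUP_least Jval_le)
  then have "?S x2 c1 < top" using ennreal_less_top by (rule order_le_less_trans)
  ultimately show ?thesis
    unfolding Vval_def by (rule enn2real_mono)
qed

lemma (in prob_space) Vval_difference_le:
  assumes regular: "AE \<omega> in M. regular_path E U \<omega>" and "0 < q" "0 \<le> cbar"
    and x: "0 \<le> x1" "x1 \<le> x2" and c: "p < c1" "c1 \<le> c2" "c2 \<le> cbar"
  shows "Vval M E U p q cbar x2 c1 - Vval M E U p q cbar x1 c2
    \<le> cbar / (c1 - p) * (x2 - x1) + cbar * x2 / (c1 - p)^2 * (c2 - c1)"
proof -
  define L where "L = ((x2 - x1) + (c2 - c1) * x2 / (c1 - p)) / (c1 - p)"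
  let ?S = "\<lambda>x c. SUP C \<in> strategies M E U p cbar x c. Jval M E U p q x C"
  have "?S x2 c1 \<le> ?S x1 c2 + ennreal (cbar * L)"
  proof (rule SUP_least)
    fix C assume C: "C \<in> strategies M E U p cbar x2 c1"
    then have "Jval M E U p q x2 C
        \<le> Jval M E U p q x1 (\<lambda>t \<omega>. max (C t \<omega>) c2) + ennreal (cbar * L)"
      unfolding L_def using \<open>0 < q\<close> by (intro Jval_le_max_strategy[OF regular _ x c(1,2)]) auto
    also have "Jval M E U p q x1 (\<lambda>t \<omega>. max (C t \<omega>) c2) \<le> ?S x1 c2"
      using c max_strategy[OF _ _ C] by (intro SUP_upper) auto
    finally show "Jval M E U p q x2 C \<le> ?S x1 c2 + ennreal (cbar * L)"
      by (simp add: add_right_mono)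
  qed
  moreover have "?S x1 c2 \<le> ennreal (cbar / q)"
    using assms by (intro SUP_least Jval_le)
  then have finite: "?S x1 c2 < top" using ennreal_less_top by (rule order_le_less_trans)
  then have "?S x1 c2 + ennreal (cbar * L) < top" by simp
  ultimately have "enn2real (?S x2 c1) \<le> enn2real (?S x1 c2 + ennreal (cbar * L))"
    by (rule enn2real_mono)
  also have "\<dots> = enn2real (?S x1 c2) + cbar * L"
    using finite x c \<open>0 \<le> cbar\<close> by (simp add: enn2real_plus L_def)
  finally have "Vval M E U p q cbar x2 c1 - Vval M E U p q cbar x1 c2 \<le> cbar * L"
    unfolding Vval_def by simp
  moreover have "cbar * ((a + d * x2 / k) / k) = cbar / k * a + cbar * x2 / k^2 * d"
    if "k \<noteq> 0" for k a d :: real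
    using that by (simp add: field_simps power2_eq_square)
  ultimately show ?thesis
    using c unfolding L_def by simp
qed

theorem proposition3p3:
  fixes M :: "'a measure" and E U :: "nat \<Rightarrow> 'a \<Rightarrow> real"
    and \<beta> p q cbar :: real
  assumes "prob_space M"
    and "\<beta> > 0" and "p > 0" and "q > 0"
    and "\<forall>i. distributed M lborel (E i) (exponential_density \<beta>)"
    and "prob_space.indep_vars M (\<lambda>_. borel) (\<lambda>j. case j of Inl i \<Rightarrow> E i | Inr i \<Rightarrow> U i) UNIV"
    and "\<forall>i. distr M borel (U i) = distr M borel (U 0)"
    and "\<forall>i. AE \<omega> in M. U i \<omega> > 0"
    and "\<forall>y. isCont (cdf (distr M borel (U 0))) y"
    and "\<exists>K>0. \<forall>a b. a < b \<longrightarrow> cdf (distr M borel (U 0)) b - cdf (distr M borel (U 0)) a \<le> K * (b - a)"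
    and "integrable M (U 0)"
    and "p > \<beta> * (\<integral>\<omega>. U 0 \<omega> \<partial>M)"
    and "cbar > p"
  shows "\<exists>K2>0. \<exists>K3>0. \<forall>x1 x2 c1 c2. 0 \<le> x1 \<longrightarrow> x1 \<le> x2 \<longrightarrow> p < c1 \<longrightarrow> c1 \<le> c2 \<longrightarrow> c2 \<le> cbar \<longrightarrow>
     0 \<le> Vval M E U p q cbar x2 c1 - Vval M E U p q cbar x1 c2 \<and>
     Vval M E U p q cbar x2 c1 - Vval M E U p q cbar x1 c2
       \<le> (K2 + K3 / (c1 - p)) * (x2 - x1) + (K2 + K3 * x2 / (c1 - p)^2) * (c2 - c1)"
proof -
  interpret prob_space M by fact
  have "indep_vars (\<lambda>_. borel) E UNIV"
    using indep_vars_reindex[OF _ indep_vars_subset[OF assms(6)], of Inl UNIV] by simp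
  moreover have "AE \<omega> in M. 0 \<le> U i \<omega>" for i
    by (rule eventually_mono[OF assms(8)[rule_format, of i]]) simp
  ultimately have regular: "AE \<omega> in M. regular_path E U \<omega>"
    using assms(2,5) by (intro AE_regular_path) auto
  have cbar: "0 \<le> cbar" using assms(3,13) by simp
  have "0 \<le> Vval M E U p q cbar x2 c1 - Vval M E U p q cbar x1 c2 \<and>
     Vval M E U p q cbar x2 c1 - Vval M E U p q cbar x1 c2
       \<le> (1 + cbar / (c1 - p)) * (x2 - x1) + (1 + cbar * x2 / (c1 - p)^2) * (c2 - c1)"
    if x: "0 \<le> x1" "x1 \<le> x2" and c: "p < c1" "c1 \<le> c2" "c2 \<le> cbar" for x1 x2 c1 c2
    using Vval_mono[where E = E and U = U, OF assms(4) cbar c(1,2) x(2)]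
      Vval_difference_le[OF regular assms(4) cbar x c] x c
    unfolding distrib_right mult_1 by linarith
  then show ?thesis
    using assms(3,13) by (intro exI[of _ 1] conjI exI[of _ cbar]) auto
qed

end
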